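(* There exist $\varepsilon_0>0$ and $n_0$ such that for every $\varepsilon\in(0,\varepsilon_0]$ and $n\ge n_0$ the following holds. Let $\hat G$ be an $\varepsilon$-superextremal two-clique on $n$ vertices with partition $V(\hat G)=A\uplus B$, and let $Z=\{f,f'\}$ where $f,f'$ are vertex-disjoint edges between $A$ and $B$, such that the set of edges of $\hat G$ between $A$ and $B$ is exactly $Z$. Let $\vec H$ be a directed Hamilton cycle of $\hat G$. Then for every $e\in E(H)\setminus Z$ there are at least $n^2/300$ pairs $(e',i)$ with $e'\in E(\hat G)\setminus E(H)$ and $i\in\{1,2\}$ such that the switching $s_i(\vec H;e,e')$ is admissible (with respect to $\hat G$).
   Context: $d(v,X)$ is the number of neighbours of $v$ in $X$. A graph on $n$ vertices is an $\varepsilon$-superextremal two-clique with partition $A\uplus B$ if: (A1) $||A|-|B||\le\varepsilon n$; (A2) $d(a,A)\ge(1/2-\varepsilon)n$ for all but at most $\varepsilon n$ vertices $a\in A$; (A3) $d(a,A)\ge(1/4-\varepsilon)n$ for all $a\in A$; (A4) $d(b,B)\ge(1/2-\varepsilon)n$ for all but at most $\varepsilon n$ vertices $b\in B$; (A5) $d(b,B)\ge(1/4-\varepsilon)n$ for all $b\in B$. A directed Hamilton cycle $\vec H$ is a Hamilton cycle $H$ with a cyclic orientation; its successor function $\pi$ sends $x$ to the head of the arc leaving $x$. For $e=x\pi(x)\in E(H)$ and $e'=x'y'\notin E(H)$ with endpoints labelled so that $x$ lies on the directed path of $\vec H$ from $y'$ to $x'$, let $H_1=(H-\{e,x'\pi(x'),\pi^{-1}(y')y'\})+\{e',x\pi(x'),\pi^{-1}(y')\pi(x)\}$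 and $H_2=(H-\{e,x'\pi(x'),\pi^{-1}(y')y'\})+\{e',x\pi^{-1}(y'),\pi(x)\pi(x')\}$; $s_i(\vec H;e,e')$ is $H_i$ oriented to contain the arc $(x',y')$. It is admissible (with respect to a graph $G$) if $H_i\subseteq G$. *)

theory Defs
  imports Complex_Main
begin

definition simple_graph :: "'a set \<Rightarrow> 'a set set \<Rightarrow> bool" where
  "simple_graph V E \<longleftrightarrow> finite V \<and> (\<forall>e\<in>E. \<exists>u v. u \<in> V \<and> v \<in> V \<and> u \<noteq> v \<and> e = {u, v})"

definition deg_in :: "'a set set \<Rightarrow> 'a \<Rightarrow> 'a set \<Rightarrow> nat" where
  "deg_in E v X = card {u \<in> X. {v, u} \<in> E}"

definition superextremal_two_clique ::
  "real \<Rightarrow> 'a set \<Rightarrow> 'a set set \<Rightarrow> 'a set \<Rightarrow> 'a set \<Rightarrow> bool" where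
  "superextremal_two_clique \<epsilon> V E A B \<longleftrightarrow>
     (let n = real (card V) in
       A \<union> B = V \<and> A \<inter> B = {} \<and>
       \<bar>real (card A) - real (card B)\<bar> \<le> \<epsilon> * n \<and>
       real (card {a \<in> A. real (deg_in E a A) < (1/2 - \<epsilon>) * n}) \<le> \<epsilon> * n \<and>
       (\<forall>a\<in>A. real (deg_in E a A) \<ge> (1/4 - \<epsilon>) * n) \<and>
       real (card {b \<in> B. real (deg_in E b B) < (1/2 - \<epsilon>) * n}) \<le> \<epsilon> * n \<and>
       (\<forall>b\<in>B. real (deg_in E b B) \<ge> (1/4 - \<epsilon>) * n))"

text \<open>A directed Hamilton cycle of (V,E), given by its successor function \<pi>:
  \<pi> permutes V, every vertex reaches every other vertex by iterating \<pi> (one cycle),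
  and each arc x \<pi>(x) is an edge of the graph.\<close>
definition dir_ham_cycle :: "'a set \<Rightarrow> 'a set set \<Rightarrow> ('a \<Rightarrow> 'a) \<Rightarrow> bool" where
  "dir_ham_cycle V E \<pi> \<longleftrightarrow>
     bij_betw \<pi> V V \<and>
     (\<forall>x\<in>V. \<forall>y\<in>V. \<exists>k. (\<pi> ^^ k) x = y) \<and>
     (\<forall>x\<in>V. {x, \<pi> x} \<in> E)"

definition ham_edges :: "'a set \<Rightarrow> ('a \<Rightarrow> 'a) \<Rightarrow> 'a set set" where
  "ham_edges V \<pi> = {{x, \<pi> x} | x. x \<in> V}"

text \<open>The arc (x, \<pi> x) lies on the directed path of the cycle from y' to x':
  x is reached from y' by iterating \<pi> strictly before x' is reached.\<close>
definition arc_on_path :: "('a \<Rightarrow> 'a) \<Rightarrow> 'a \<Rightarrow> 'a \<Rightarrow> 'a \<Rightarrow> bool" where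
  "arc_on_path \<pi> y' x' x \<longleftrightarrow> (\<exists>k. (\<pi> ^^ k) y' = x \<and> (\<forall>j\<le>k. (\<pi> ^^ j) y' \<noteq> x'))"

text \<open>Edge sets of H_1 and H_2 of the switching with e = x\<pi>(x), e' = x'y'.\<close>
definition switch_edges :: "'a set \<Rightarrow> ('a \<Rightarrow> 'a) \<Rightarrow> nat \<Rightarrow> 'a \<Rightarrow> 'a \<Rightarrow> 'a \<Rightarrow> 'a set set" where
  "switch_edges V \<pi> i x x' y' =
     (let pinv = inv_into V \<pi>;
          removed = {{x, \<pi> x}, {x', \<pi> x'}, {pinv y', y'}};
          added = (if i = 1 then {{x', y'}, {x, \<pi> x'}, {pinv y', \<pi> x}}
                   else {{x', y'}, {x, pinv y'}, {\<pi> x, \<pi> x'}})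
      in (ham_edges V \<pi> - removed) \<union> added)"

definition admissible_switch ::
  "'a set \<Rightarrow> 'a set set \<Rightarrow> ('a \<Rightarrow> 'a) \<Rightarrow> 'a \<Rightarrow> 'a set \<Rightarrow> nat \<Rightarrow> bool" where
  "admissible_switch V E \<pi> x e' i \<longleftrightarrow>
     (\<exists>x' y'. e' = {x', y'} \<and> arc_on_path \<pi> y' x' x \<and> switch_edges V \<pi> i x x' y' \<subseteq> E)"

end

theory Submission
  imports Defs
begin

text \<open>
  Enumerate the Hamilton cycle as v(0) = \<pi>(x), v(1), ..., v(n-1) = x, and let S be the clique
  side containing the arc x\<pi>(x); call a vertex of S good if it has at least (1/2 - \<epsilon>)n
  neighbours in S, so that it has at most (3/2)\<epsilon>n non-neighbours there. For positions a, b
  whose cycle neighbours are good, with x adjacent to v(a) and \<pi>(x) adjacent to v(b), the chord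
  e' = v(a-1)v(b+1) makes the switching s_1 admissible if a \<le> b and s_2 admissible if b \<le> a,
  provided e' is an edge; distinct pairs give distinct switchings. The minimum degree condition,
  the few bad vertices and the two cross edges leave about n/4 choices for each of a and b,
  whereas the pairs whose chord is missing number at most 3\<epsilon>n^2, which leaves at least
  n^2/300 admissible switchings.
\<close>

lemma funpow_closed: "f ` V \<subseteq> V \<Longrightarrow> a \<in> V \<Longrightarrow> (f ^^ t) a \<in> V"
  by (induction t) auto

lemma dir_ham_cycle_enumeration:
  assumes ham: "dir_ham_cycle V E \<pi>" and w: "w \<in> V"
  shows "bij_betw (\<lambda>t. (\<pi> ^^ t) w) {..<card V} V" and "(\<pi> ^^ card V) w = w"
proof -
  have reach: "\<forall>y\<in>V. \<forall>z\<in>V. \<exists>k. (\<pi> ^^ k) y = z" and closed: "\<pi> ` V \<subseteq> V"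
    using ham unfolding dir_ham_cycle_def bij_betw_def by auto
  define d where "d = (LEAST d. 0 < d \<and> (\<pi> ^^ d) w = w)"
  have "\<exists>d. 0 < d \<and> (\<pi> ^^ d) w = w"
  proof -
    obtain k where "(\<pi> ^^ k) (\<pi> w) = w" using reach w closed by blast
    then have "(\<pi> ^^ Suc k) w = w" by (simp add: funpow_swap1)
    then show ?thesis by blast
  qed
  then have d: "0 < d" "(\<pi> ^^ d) w = w"
    unfolding d_def by (metis (mono_tags, lifting) LeastI_ex)+
  have minimal: "(\<pi> ^^ m) w \<noteq> w" if "0 < m" "m < d" for m
    using not_less_Least[OF that(2)[unfolded d_def]] that(1) by simp
  have inj: "inj_on (\<lambda>t. (\<pi> ^^ t) w) {..<d}"
    using inj_on_funpow_least[OF d(2) minimal] by (simp add: lessThan_atLeast0)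
  have "(\<lambda>t. (\<pi> ^^ t) w) ` {..<d} = V"
  proof
    show "(\<lambda>t. (\<pi> ^^ t) w) ` {..<d} \<subseteq> V" using funpow_closed[OF closed w] by auto
    show "V \<subseteq> (\<lambda>t. (\<pi> ^^ t) w) ` {..<d}"
    proof
      fix y assume "y \<in> V"
      then obtain k where "(\<pi> ^^ k) w = y" using reach w by blast
      then have "y = (\<pi> ^^ (k mod d)) w" using funpow_mod_eq[OF d(2), of k] by simp
      then show "y \<in> (\<lambda>t. (\<pi> ^^ t) w) ` {..<d}" using d(1) by auto
    qed
  qed
  with inj have bij: "bij_betw (\<lambda>t. (\<pi> ^^ t) w) {..<d} V" by (simp add: bij_betw_def)
  then have "card V = d" using bij_betw_same_card by fastforce
  with bij d(2) show "bij_betw (\<lambda>t. (\<pi> ^^ t) w) {..<card V} V" "(\<pi> ^^ card V) w = w" by simp_all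
qed

lemma card_non_neighbours:
  assumes "finite S"
  shows "card {u \<in> S. {g, u} \<notin> E} = card S - deg_in E g S"
proof -
  have "{u \<in> S. {g, u} \<notin> E} = S - {u \<in> S. {g, u} \<in> E}" by auto
  then show ?thesis
    using assms by (simp add: deg_in_def card_Diff_subset)
qed

lemma card_non_neighbours_le:
  fixes \<epsilon> N :: real
  assumes "finite S" "real (card S) \<le> (1 + \<epsilon>) * N / 2" "(1/2 - \<epsilon>) * N \<le> real (deg_in E g S)"
  shows "real (card {u \<in> S. {g, u} \<notin> E}) \<le> 3/2 * \<epsilon> * N"
proof -
  have "deg_in E g S \<le> card S"
    unfolding deg_in_def using assms(1) by (intro card_mono) auto
  then show ?thesis
    using assms by (simp add: card_non_neighbours of_nat_diff algebra_simps)
qed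

lemma card_pairs_le:
  assumes "finite X" "finite W" "\<And>a. a \<in> X \<Longrightarrow> real (card {b \<in> W. P a b}) \<le> m"
  shows "real (card {(a, b) \<in> X \<times> W. P a b}) \<le> real (card X) * m"
proof -
  have "{(a, b) \<in> X \<times> W. P a b} = Sigma X (\<lambda>a. {b \<in> W. P a b})" by auto
  then have "real (card {(a, b) \<in> X \<times> W. P a b}) = (\<Sum>a\<in>X. real (card {b \<in> W. P a b}))"
    using assms(1,2) by (simp add: card_SigmaI)
  also have "\<dots> \<le> real (card X) * m"
    using assms(3) by (rule sum_bounded_above)
  finally show ?thesis .
qed

lemma card_pairs_le_swap:
  assumes "finite X" "finite W" "\<And>b. b \<in> W \<Longrightarrow> real (card {a \<in> X. P a b}) \<le> m"
  shows "real (card {(a, b) \<in> X \<times> W. P a b}) \<le> real (card W) * m"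
proof -
  have "{(a, b) \<in> X \<times> W. P a b} = prod.swap ` {(b, a) \<in> W \<times> X. P a b}" by force
  then have "card {(a, b) \<in> X \<times> W. P a b} = card {(b, a) \<in> W \<times> X. P a b}"
    by (simp add: card_image)
  then show ?thesis
    using card_pairs_le[of W X "\<lambda>b a. P a b"] assms by simp
qed

lemma switching_count_arithmetic:
  fixes N \<epsilon> p q t :: real
  assumes "1000 \<le> N" "\<epsilon> \<le> 1/100"
    and "(1/4 - 3 * \<epsilon>) * N - 6 \<le> p" "(1/4 - 3 * \<epsilon>) * N - 6 \<le> q"
    and "p * q \<le> t + 3 * \<epsilon> * N\<^sup>2 + 2"
  shows "N\<^sup>2 / 300 \<le> t"
proof -
  have "\<epsilon> * N \<le> 1/100 * N"
    using assms(1,2) by (intro mult_right_mono) auto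
  then have "22/100 * N \<le> (1/4 - 3 * \<epsilon>) * N"
    by (simp add: algebra_simps)
  then have "22/100 * N - 6 \<le> p" "22/100 * N - 6 \<le> q" "0 \<le> 22/100 * N - 6"
    using assms(1,3,4) by linarith+
  then have "(22/100 * N - 6)\<^sup>2 \<le> p * q"
    unfolding power2_eq_square by (intro mult_mono) auto
  moreover have "\<epsilon> * N\<^sup>2 \<le> 1/100 * N\<^sup>2"
    using assms(2) by (intro mult_right_mono) auto
  moreover have "1000 * N \<le> N\<^sup>2" "0 \<le> N\<^sup>2"
    using assms(1) by (simp_all add: power2_eq_square mult_right_mono)
  moreover have "(22/100 * N - 6)\<^sup>2 = 484/10000 * N\<^sup>2 - 264/100 * N + 36"
    by (simp add: power2_eq_square algebra_simps)
  moreover have "3 * \<epsilon> * N\<^sup>2 = 3 * (\<epsilon> * N\<^sup>2)"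
    by simp
  ultimately show ?thesis
    using assms(5) by linarith
qed

locale ham_cycle_arc =
  fixes V :: "'a set" and E :: "'a set set" and \<pi> :: "'a \<Rightarrow> 'a" and x :: 'a
  assumes graph: "simple_graph V E" and ham: "dir_ham_cycle V E \<pi>" and x_in_V: "x \<in> V"
begin

lemma finite_V: "finite V"
  using graph by (simp add: simple_graph_def)

lemma finite_E: "finite E"
proof -
  have "E \<subseteq> Pow V"
    using graph unfolding simple_graph_def by fastforce
  then show ?thesis using finite_V finite_subset by blast
qed

text \<open>The cycle is enumerated from the head of the arc x\<pi>(x), so that this arc is the closing
  edge vert (card V - 1) vert 0.\<close>

definition vert :: "nat \<Rightarrow> 'a" where
  "vert t = (\<pi> ^^ t) (\<pi> x)"

lemma pi_bij: "bij_betw \<pi> V V" and ham_arc_edge: "y \<in> V \<Longrightarrow> {y, \<pi> y} \<in> E"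
  using ham unfolding dir_ham_cycle_def by auto

lemma pi_in_V: "y \<in> V \<Longrightarrow> \<pi> y \<in> V"
  using pi_bij by (auto simp: bij_betw_def)

lemma vert_0: "vert 0 = \<pi> x" and vert_Suc: "vert (Suc t) = \<pi> (vert t)"
  by (simp_all add: vert_def)

lemma vert_bij: "bij_betw vert {..<card V} V" and vert_card: "vert (card V) = \<pi> x"
  using dir_ham_cycle_enumeration[OF ham pi_in_V[OF x_in_V]]
  unfolding vert_def[abs_def] by simp_all

lemma vert_in_V: "vert t \<in> V"
  unfolding vert_def by (rule funpow_closed) (auto intro: pi_in_V x_in_V)

lemma vert_eq_iff: "p < card V \<Longrightarrow> q < card V \<Longrightarrow> vert p = vert q \<longleftrightarrow> p = q"
  using vert_bij by (auto simp: bij_betw_def inj_on_def)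

lemma card_V_pos: "0 < card V"
  using finite_V x_in_V card_gt_0_iff by blast

lemma vert_last: "vert (card V - 1) = x"
proof -
  have "\<pi> (vert (card V - 1)) = \<pi> x"
    using vert_Suc[of "card V - 1"] vert_card card_V_pos by simp
  then show ?thesis using pi_bij vert_in_V x_in_V by (auto simp: bij_betw_def inj_on_def)
qed

lemma inv_vert_Suc: "inv_into V \<pi> (vert (Suc t)) = vert t"
  unfolding vert_Suc using pi_bij vert_in_V by (simp add: bij_betw_def)

lemma edge_vert_Suc: "{vert t, vert (Suc t)} \<in> E"
  using ham_arc_edge vert_in_V by (simp add: vert_Suc)

lemma card_vert_positions: "card {t \<in> {..<card V}. vert t \<in> Y} = card (Y \<inter> V)"
proof -
  have "inj_on vert {t \<in> {..<card V}. vert t \<in> Y}" and "vert ` {t \<in> {..<card V}. vert t \<in> Y} = Y \<inter> V"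
    using vert_bij by (auto simp: bij_betw_def inj_on_def)
  then show ?thesis using card_image by fastforce
qed

lemma vert_doubleton_eq:
  assumes "p < q" "q < card V" "p' < q'" "q' < card V" "{vert p, vert q} = {vert p', vert q'}"
  shows "p = p' \<and> q = q'"
proof -
  have "p < card V" "p' < card V" using assms by simp_all
  then show ?thesis
    using assms(5) vert_eq_iff assms by (metis doubleton_eq_iff less_asym)
qed

lemma ham_edge_vert:
  assumes "p < q" "q < card V" "{vert p, vert q} \<in> ham_edges V \<pi>"
  shows "q = Suc p \<or> (p = 0 \<and> q = card V - 1)"
proof -
  obtain y where "y \<in> V" and pq: "{vert p, vert q} = {y, \<pi> y}"
    using assms(3) unfolding ham_edges_def by blast
  then obtain t where t: "t < card V" "y = vert t"
    using bij_betw_imp_surj_on[OF vert_bij] by blast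
  show ?thesis
  proof (cases "Suc t < card V")
    case True
    then have "{vert p, vert q} = {vert t, vert (Suc t)}" using pq t by (simp add: vert_Suc)
    then show ?thesis using vert_doubleton_eq[OF assms(1,2) lessI True] by simp
  next
    case False
    then have "t = card V - 1" using t by simp
    then have "{vert p, vert q} = {vert 0, vert (card V - 1)}"
      using pq t vert_last by (simp add: vert_0 insert_commute)
    then show ?thesis using vert_doubleton_eq[OF assms(1,2), of 0 "card V - 1"] assms by fastforce
  qed
qed

lemma funpow_vert: "(\<pi> ^^ j) (vert q) = vert (j + q)"
  by (simp add: vert_def funpow_add)

lemma arc_on_path_vert:
  assumes "p < q" "q < card V"
  shows "arc_on_path \<pi> (vert q) (vert p) x"
  unfolding arc_on_path_def
proof (intro exI conjI allI impI)
  show "(\<pi> ^^ (card V - 1 - q)) (vert q) = x"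
    using assms vert_last by (simp add: funpow_vert)
  fix j assume "j \<le> card V - 1 - q"
  then have "j + q < card V" "p \<noteq> j + q" using assms by linarith+
  then show "(\<pi> ^^ j) (vert q) \<noteq> vert p"
    using assms vert_eq_iff by (simp add: funpow_vert)
qed

definition admissible_pairs :: "('a set \<times> nat) set" where
  "admissible_pairs =
     {(e', i). e' \<in> E - ham_edges V \<pi> \<and> i \<in> {1, 2} \<and> admissible_switch V E \<pi> x e' i}"

lemma admissible_pairsI:
  assumes "Suc p < q" "q < card V" "\<not> (p = 0 \<and> q = card V - 1)" "i \<in> {1, 2}"
    and "switch_edges V \<pi> i x (vert p) (vert q) \<subseteq> E"
  shows "({vert p, vert q}, i) \<in> admissible_pairs"
proof -
  have "{vert p, vert q} \<in> E"
    using assms(5) unfolding switch_edges_def Let_def by auto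
  moreover have "{vert p, vert q} \<notin> ham_edges V \<pi>"
    using ham_edge_vert[of p q] assms(1-3) by auto
  moreover have "admissible_switch V E \<pi> x {vert p, vert q} i"
    unfolding admissible_switch_def using arc_on_path_vert[of p q] assms(1,2,5) by auto
  ultimately show ?thesis
    unfolding admissible_pairs_def using assms(4) by simp
qed

lemma ham_edges_subset: "ham_edges V \<pi> \<subseteq> E"
  unfolding ham_edges_def using ham_arc_edge by auto

lemma switch_edges_1_subset:
  assumes "0 < q" "{vert p, vert q} \<in> E" "{x, vert (Suc p)} \<in> E" "{\<pi> x, vert (q - 1)} \<in> E"
  shows "switch_edges V \<pi> 1 x (vert p) (vert q) \<subseteq> E"
proof -
  have "inv_into V \<pi> (vert q) = vert (q - 1)"
    using inv_vert_Suc[of "q - 1"] assms(1) by simp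
  then show ?thesis
    using assms ham_edges_subset unfolding switch_edges_def Let_def
    by (auto simp: vert_Suc insert_commute)
qed

lemma switch_edges_2_subset:
  assumes "0 < q" "{vert p, vert q} \<in> E" "{x, vert (q - 1)} \<in> E" "{\<pi> x, vert (Suc p)} \<in> E"
  shows "switch_edges V \<pi> 2 x (vert p) (vert q) \<subseteq> E"
proof -
  have "inv_into V \<pi> (vert q) = vert (q - 1)"
    using inv_vert_Suc[of "q - 1"] assms(1) by simp
  then show ?thesis
    using assms ham_edges_subset unfolding switch_edges_def Let_def
    by (auto simp: vert_Suc insert_commute)
qed

text \<open>Here x' = vert (a - 1) and y' = vert (Suc b); switching 1 adds the edges x vert a and
  vert b \<pi>(x), switching 2 the edges x vert b and vert a \<pi>(x). The pair (1, card V - 2) is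
  excluded since its chord vert 0 vert (card V - 1) is the cycle edge e itself.\<close>

lemma switching_across_interval:
  assumes "0 < a" "a \<le> b" "Suc b < card V" "\<not> (a = 1 \<and> b = card V - 2)"
    and "{vert (a - 1), vert (Suc b)} \<in> E"
  shows "{x, vert a} \<in> E \<Longrightarrow> {\<pi> x, vert b} \<in> E \<Longrightarrow> ({vert (a - 1), vert (Suc b)}, 1) \<in> admissible_pairs"
    and "{x, vert b} \<in> E \<Longrightarrow> {\<pi> x, vert a} \<in> E \<Longrightarrow> ({vert (a - 1), vert (Suc b)}, 2) \<in> admissible_pairs"
proof -
  have pq: "Suc (a - 1) < Suc b" "\<not> (a - 1 = 0 \<and> Suc b = card V - 1)"
    using assms(1-4) by auto
  show "({vert (a - 1), vert (Suc b)}, 1) \<in> admissible_pairs"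
    if "{x, vert a} \<in> E" "{\<pi> x, vert b} \<in> E"
    using that assms(1,3,5) pq
    by (intro admissible_pairsI switch_edges_1_subset) auto
  show "({vert (a - 1), vert (Suc b)}, 2) \<in> admissible_pairs"
    if "{x, vert b} \<in> E" "{\<pi> x, vert a} \<in> E"
    using that assms(1,3,5) pq
    by (intro admissible_pairsI switch_edges_2_subset) auto
qed

lemma inj_on_interval_chords:
  "inj_on (\<lambda>(a, b). {vert (a - 1), vert (Suc b)}) {(a, b). 0 < a \<and> a \<le> b \<and> Suc b < card V}"
proof (rule inj_onI)
  fix u u' assume "u \<in> {(a, b). 0 < a \<and> a \<le> b \<and> Suc b < card V}"
    "u' \<in> {(a, b). 0 < a \<and> a \<le> b \<and> Suc b < card V}"
    and eq: "(\<lambda>(a, b). {vert (a - 1), vert (Suc b)}) u = (\<lambda>(a, b). {vert (a - 1), vert (Suc b)}) u'"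
  moreover obtain a b a' b' where u: "u = (a, b)" "u' = (a', b')" by fastforce
  ultimately have "0 < a" "a - 1 < Suc b" "Suc b < card V"
    "0 < a'" "a' - 1 < Suc b'" "Suc b' < card V"
    and "{vert (a - 1), vert (Suc b)} = {vert (a' - 1), vert (Suc b')}"
    by auto
  then have "a - 1 = a' - 1" "Suc b = Suc b'"
    using vert_doubleton_eq by blast+
  with u \<open>0 < a\<close> \<open>0 < a'\<close> show "u = u'" by simp
qed

lemma finite_admissible_pairs: "finite admissible_pairs"
proof -
  have "admissible_pairs \<subseteq> E \<times> {1, 2}"
    unfolding admissible_pairs_def by auto
  then show ?thesis using finite_E finite_subset by blast
qed

text \<open>Pairs with a \<le> b are charged to switching 1, pairs with b \<le> a to switching 2; in both
  cases the chord determines the pair.\<close>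

lemma card_switchable_pairs_le:
  assumes X: "X \<subseteq> {a. 0 < a \<and> Suc a < card V}" "\<And>a. a \<in> X \<Longrightarrow> {x, vert a} \<in> E"
    and W: "W \<subseteq> {b. 0 < b \<and> Suc b < card V}" "\<And>b. b \<in> W \<Longrightarrow> {\<pi> x, vert b} \<in> E"
  defines "P1 \<equiv> {(a, b) \<in> X \<times> W. a \<le> b \<and> {vert (a - 1), vert (Suc b)} \<in> E \<and> (a, b) \<noteq> (1, card V - 2)}"
    and "P2 \<equiv> {(a, b) \<in> X \<times> W. b \<le> a \<and> {vert (b - 1), vert (Suc a)} \<in> E \<and> (b, a) \<noteq> (1, card V - 2)}"
  shows "card P1 + card P2 \<le> card admissible_pairs"
proof -
  define chord where "chord = (\<lambda>(a, b). {vert (a - 1), vert (Suc b)})"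
  define sw1 where "sw1 = (\<lambda>ab. (chord ab, 1::nat))"
  define sw2 where "sw2 = (\<lambda>ab. (chord (prod.swap ab), 2::nat))"
  have dom: "P1 \<subseteq> {(a, b). 0 < a \<and> a \<le> b \<and> Suc b < card V}"
    "prod.swap ` P2 \<subseteq> {(a, b). 0 < a \<and> a \<le> b \<and> Suc b < card V}"
    using X(1) W(1) unfolding P1_def P2_def by auto
  have "inj_on chord P1"
    unfolding chord_def by (rule inj_on_subset[OF inj_on_interval_chords dom(1)])
  moreover have "inj_on (chord \<circ> prod.swap) P2"
    unfolding chord_def by (rule comp_inj_on[OF inj_swap inj_on_subset[OF inj_on_interval_chords dom(2)]])
  ultimately have inj: "inj_on sw1 P1" "inj_on sw2 P2"
    unfolding sw1_def sw2_def inj_on_def by auto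
  have "sw1 ` P1 \<subseteq> admissible_pairs"
  proof (rule image_subsetI)
    fix ab assume "ab \<in> P1"
    moreover obtain a b where "ab = (a, b)" by fastforce
    ultimately have ab: "a \<in> X" "b \<in> W" "a \<le> b" "\<not> (a = 1 \<and> b = card V - 2)"
      and chord: "{vert (a - 1), vert (Suc b)} \<in> E"
      unfolding P1_def by auto
    then have "0 < a" "Suc b < card V" using X(1) W(1) by auto
    with ab chord X(2) W(2) show "sw1 ab \<in> admissible_pairs"
      unfolding \<open>ab = (a, b)\<close> sw1_def chord_def case_prod_conv
      by (intro switching_across_interval(1)) simp_all
  qed
  moreover have "sw2 ` P2 \<subseteq> admissible_pairs"
  proof (rule image_subsetI)
    fix ab assume "ab \<in> P2"
    moreover obtain a b where "ab = (a, b)" by fastforce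
    ultimately have ab: "a \<in> X" "b \<in> W" "b \<le> a" "\<not> (b = 1 \<and> a = card V - 2)"
      and chord: "{vert (b - 1), vert (Suc a)} \<in> E"
      unfolding P2_def by auto
    then have "0 < b" "Suc a < card V" using X(1) W(1) by auto
    with ab chord X(2) W(2) show "sw2 ab \<in> admissible_pairs"
      unfolding \<open>ab = (a, b)\<close> sw2_def chord_def swap_simp case_prod_conv
      by (intro switching_across_interval(2)) simp_all
  qed
  ultimately have "finite (sw1 ` P1)" "finite (sw2 ` P2)" "sw1 ` P1 \<union> sw2 ` P2 \<subseteq> admissible_pairs"
    using finite_admissible_pairs finite_subset by auto
  moreover have "sw1 ` P1 \<inter> sw2 ` P2 = {}"
    unfolding sw1_def sw2_def by auto
  ultimately have "card (sw1 ` P1) + card (sw2 ` P2) \<le> card admissible_pairs"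
    using finite_admissible_pairs by (metis card_Un_disjoint card_mono)
  with inj show ?thesis
    by (simp add: card_image)
qed

lemma card_product_le_admissible_pairs:
  assumes X: "X \<subseteq> {a. 0 < a \<and> Suc a < card V}" "\<And>a. a \<in> X \<Longrightarrow> {x, vert a} \<in> E"
    and W: "W \<subseteq> {b. 0 < b \<and> Suc b < card V}" "\<And>b. b \<in> W \<Longrightarrow> {\<pi> x, vert b} \<in> E"
  shows "card X * card W \<le> card admissible_pairs
           + card {(a, b) \<in> X \<times> W. {vert (a - 1), vert (Suc b)} \<notin> E}
           + card {(a, b) \<in> X \<times> W. {vert (b - 1), vert (Suc a)} \<notin> E} + 2"
proof -
  define P1 where "P1 = {(a, b) \<in> X \<times> W. a \<le> b \<and> {vert (a - 1), vert (Suc b)} \<in> E \<and> (a, b) \<noteq> (1, card V - 2)}"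
  define P2 where "P2 = {(a, b) \<in> X \<times> W. b \<le> a \<and> {vert (b - 1), vert (Suc a)} \<in> E \<and> (b, a) \<noteq> (1, card V - 2)}"
  define B1 where "B1 = {(a, b) \<in> X \<times> W. {vert (a - 1), vert (Suc b)} \<notin> E}"
  define B2 where "B2 = {(a, b) \<in> X \<times> W. {vert (b - 1), vert (Suc a)} \<notin> E}"
  have "X \<subseteq> {..<card V}" "W \<subseteq> {..<card V}"
    using X(1) W(1) by auto
  then have "finite (X \<times> W)"
    using finite_subset by blast
  moreover have "P1 \<subseteq> X \<times> W" "P2 \<subseteq> X \<times> W" "B1 \<subseteq> X \<times> W" "B2 \<subseteq> X \<times> W"
    unfolding P1_def P2_def B1_def B2_def by auto
  ultimately have fin: "finite P1" "finite P2" "finite B1" "finite B2"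
    using finite_subset by metis+
  have "X \<times> W \<subseteq> P1 \<union> P2 \<union> B1 \<union> B2 \<union> {(1, card V - 2), (card V - 2, 1)}"
    unfolding P1_def P2_def B1_def B2_def by auto
  then have "card (X \<times> W) \<le> card (P1 \<union> P2 \<union> B1 \<union> B2 \<union> {(1, card V - 2), (card V - 2, 1)})"
    using fin by (intro card_mono) auto
  also have "\<dots> \<le> card P1 + card P2 + card B1 + card B2 + card {(1, card V - 2), (card V - 2, 1)}"
    by (intro card_Un_le[THEN order_trans] add_mono order_refl)
  also have "card {(1, card V - 2), (card V - 2, 1)} \<le> 2"
    by (simp add: card_insert_le_m1)
  finally have "card X * card W \<le> card P1 + card P2 + card B1 + card B2 + 2"
    by (simp add: card_cartesian_product)
  moreover have "card P1 + card P2 \<le> card admissible_pairs"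
    unfolding P1_def P2_def using X W by (rule card_switchable_pairs_le)
  ultimately show ?thesis
    unfolding B1_def B2_def by linarith
qed

definition good_positions :: "'a set \<Rightarrow> nat set" where
  "good_positions G = {a. 0 < a \<and> Suc a < card V \<and> vert (a - 1) \<in> G \<and> vert (Suc a) \<in> G}"

text \<open>A vertex of S whose cycle neighbour lies outside S is incident with a cross edge and
  hence lies in F; otherwise that neighbour is one of the vertices of S - G.\<close>

lemma positions_next_to_bad_subset:
  fixes S G F :: "'a set"
  assumes cross: "\<And>u u'. u \<in> S \<Longrightarrow> u' \<in> V - S \<Longrightarrow> {u, u'} \<in> E \<Longrightarrow> u \<in> F"
  defines "Q \<equiv> {c \<in> {..<card V}. vert c \<in> S - G}"
  shows "{a. 0 < a \<and> Suc a < card V \<and> vert a \<in> S \<and> (vert (a - 1) \<notin> G \<or> vert (Suc a) \<notin> G)}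
           \<subseteq> {a \<in> {..<card V}. vert a \<in> F} \<union> Suc ` Q \<union> (\<lambda>c. c - 1) ` Q"
proof
  fix a assume "a \<in> {a. 0 < a \<and> Suc a < card V \<and> vert a \<in> S \<and> (vert (a - 1) \<notin> G \<or> vert (Suc a) \<notin> G)}"
  then have a: "0 < a" "Suc a < card V" "vert a \<in> S" "vert (a - 1) \<notin> G \<or> vert (Suc a) \<notin> G"
    by simp_all
  show "a \<in> {a \<in> {..<card V}. vert a \<in> F} \<union> Suc ` Q \<union> (\<lambda>c. c - 1) ` Q"
  proof (cases "a - 1 \<in> Q \<or> Suc a \<in> Q")
    case True
    then show ?thesis
    proof
      assume "a - 1 \<in> Q"
      then have "Suc (a - 1) \<in> Suc ` Q" by (rule imageI)
      then show ?thesis using a(1) by simp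
    next
      assume "Suc a \<in> Q"
      then have "Suc a - 1 \<in> (\<lambda>c. c - 1) ` Q" by (rule imageI)
      then show ?thesis by simp
    qed
  next
    case False
    moreover have "a - 1 < card V" using a(2) by simp
    ultimately have "vert (a - 1) \<notin> S - G" "vert (Suc a) \<notin> S - G"
      using a(2) unfolding Q_def by auto
    then have "vert (a - 1) \<in> V - S \<or> vert (Suc a) \<in> V - S"
      using a(4) vert_in_V by blast
    moreover have "{vert a, vert (a - 1)} \<in> E" "{vert a, vert (Suc a)} \<in> E"
      using edge_vert_Suc[of "a - 1"] edge_vert_Suc[of a] a(1) by (simp_all add: insert_commute)
    ultimately have "vert a \<in> F"
      using cross[OF a(3)] by (elim disjE) simp_all
    with a(2) show ?thesis by simp
  qed
qed

lemma card_positions_next_to_bad: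
  assumes "S \<subseteq> V" "finite F"
    and cross: "\<And>u u'. u \<in> S \<Longrightarrow> u' \<in> V - S \<Longrightarrow> {u, u'} \<in> E \<Longrightarrow> u \<in> F"
  shows "card {a. 0 < a \<and> Suc a < card V \<and> vert a \<in> S \<and> (vert (a - 1) \<notin> G \<or> vert (Suc a) \<notin> G)}
           \<le> card F + 2 * card (S - G)"
proof -
  define Q where "Q = {c \<in> {..<card V}. vert c \<in> S - G}"
  have "finite Q" unfolding Q_def by simp
  then have "card {a. 0 < a \<and> Suc a < card V \<and> vert a \<in> S \<and> (vert (a - 1) \<notin> G \<or> vert (Suc a) \<notin> G)}
             \<le> card ({a \<in> {..<card V}. vert a \<in> F} \<union> Suc ` Q \<union> (\<lambda>c. c - 1) ` Q)"
    using positions_next_to_bad_subset[where S = S and G = G and F = F, OF cross] unfolding Q_def by (intro card_mono) simp_all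
  also have "\<dots> \<le> card {a \<in> {..<card V}. vert a \<in> F} + card (Suc ` Q) + card ((\<lambda>c. c - 1) ` Q)"
    by (intro card_Un_le[THEN order_trans] add_mono order_refl)
  also have "\<dots> \<le> card F + card Q + card Q"
  proof (intro add_mono card_image_le \<open>finite Q\<close>)
    show "card {a \<in> {..<card V}. vert a \<in> F} \<le> card F"
      unfolding card_vert_positions using assms(2) by (simp add: card_mono)
  qed
  also have "card Q = card (S - G)"
  proof -
    have "(S - G) \<inter> V = S - G" using assms(1) by blast
    then show ?thesis unfolding Q_def card_vert_positions by simp
  qed
  finally show ?thesis by simp
qed

lemma deg_in_le_card_good_positions:
  assumes "S \<subseteq> V" "finite F"
    and cross: "\<And>u u'. u \<in> S \<Longrightarrow> u' \<in> V - S \<Longrightarrow> {u, u'} \<in> E \<Longrightarrow> u \<in> F"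
  shows "deg_in E z S \<le> card {a \<in> good_positions G. {z, vert a} \<in> E} + 2 + card F + 2 * card (S - G)"
proof -
  define D where
    "D = {a. 0 < a \<and> Suc a < card V \<and> vert a \<in> S \<and> (vert (a - 1) \<notin> G \<or> vert (Suc a) \<notin> G)}"
  have "{u \<in> S. {z, u} \<in> E} \<inter> V = {u \<in> S. {z, u} \<in> E}"
    using assms(1) by blast
  then have "deg_in E z S = card {t \<in> {..<card V}. vert t \<in> {u \<in> S. {z, u} \<in> E}}"
    unfolding deg_in_def card_vert_positions by simp
  also have "\<dots> \<le> card ({a \<in> good_positions G. {z, vert a} \<in> E} \<union> {0, card V - 1} \<union> D)"
  proof (rule card_mono)
    show "finite ({a \<in> good_positions G. {z, vert a} \<in> E} \<union> {0, card V - 1} \<union> D)"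
      unfolding good_positions_def D_def
      by (rule finite_subset[of _ "{..<card V}"]) (use card_V_pos in auto)
    show "{t \<in> {..<card V}. vert t \<in> {u \<in> S. {z, u} \<in> E}}
          \<subseteq> {a \<in> good_positions G. {z, vert a} \<in> E} \<union> {0, card V - 1} \<union> D"
      unfolding good_positions_def D_def by auto
  qed
  also have "\<dots> \<le> card {a \<in> good_positions G. {z, vert a} \<in> E} + card {0, card V - 1} + card D"
    by (intro card_Un_le[THEN order_trans] add_mono order_refl)
  also have "card {0, card V - 1} \<le> 2"
    by (simp add: card_insert_le_m1)
  also have "card D \<le> card F + 2 * card (S - G)"
    unfolding D_def using card_positions_next_to_bad[OF assms(1,2) cross] .
  finally show ?thesis by simp
qed

lemma card_non_adjacent_successors:
  assumes "S \<subseteq> V" "G \<subseteq> S" "W \<subseteq> good_positions G"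
  shows "card {b \<in> W. {g, vert (Suc b)} \<notin> E} \<le> card {u \<in> S. {g, u} \<notin> E}"
proof (rule card_inj_on_le)
  show "inj_on (\<lambda>b. vert (Suc b)) {b \<in> W. {g, vert (Suc b)} \<notin> E}"
  proof (rule inj_onI)
    fix b b' assume "b \<in> {b \<in> W. {g, vert (Suc b)} \<notin> E}" "b' \<in> {b \<in> W. {g, vert (Suc b)} \<notin> E}"
      and "vert (Suc b) = vert (Suc b')"
    moreover from this have "Suc b < card V" "Suc b' < card V"
      using assms(3) unfolding good_positions_def by auto
    ultimately show "b = b'" using vert_eq_iff by simp
  qed
  show "(\<lambda>b. vert (Suc b)) ` {b \<in> W. {g, vert (Suc b)} \<notin> E} \<subseteq> {u \<in> S. {g, u} \<notin> E}"
    using assms(2,3) unfolding good_positions_def by auto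
  show "finite {u \<in> S. {g, u} \<notin> E}"
    using assms(1) finite_V by (simp add: finite_subset)
qed

lemma card_chord_failures_le:
  assumes "S \<subseteq> V" "G \<subseteq> S" "X \<subseteq> good_positions G" "W \<subseteq> good_positions G" "0 \<le> m"
    and non_nbrs: "\<And>g. g \<in> G \<Longrightarrow> real (card {u \<in> S. {g, u} \<notin> E}) \<le> m"
  shows "real (card {(a, b) \<in> X \<times> W. {vert (a - 1), vert (Suc b)} \<notin> E})
           + real (card {(a, b) \<in> X \<times> W. {vert (b - 1), vert (Suc a)} \<notin> E}) \<le> 2 * real (card V) * m"
proof -
  have "good_positions G \<subseteq> {..<card V}"
    unfolding good_positions_def by auto
  then have "X \<subseteq> {..<card V}" "W \<subseteq> {..<card V}"
    using assms(3,4) by blast+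
  then have fin: "finite X" "finite W" and card_le: "card X \<le> card V" "card W \<le> card V"
    using card_mono[OF finite_lessThan] by (simp_all add: finite_subset)
  have "real (card {(a, b) \<in> X \<times> W. {vert (a - 1), vert (Suc b)} \<notin> E}) \<le> real (card X) * m"
  proof (rule card_pairs_le[OF fin])
    fix a assume "a \<in> X"
    then have "vert (a - 1) \<in> G" using assms(3) unfolding good_positions_def by auto
    then show "real (card {b \<in> W. {vert (a - 1), vert (Suc b)} \<notin> E}) \<le> m"
      using card_non_adjacent_successors[OF assms(1,2,4)] non_nbrs by (meson of_nat_le_iff order_trans)
  qed
  moreover have "real (card {(a, b) \<in> X \<times> W. {vert (b - 1), vert (Suc a)} \<notin> E}) \<le> real (card W) * m"
  proof (rule card_pairs_le_swap[OF fin])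
    fix b assume "b \<in> W"
    then have "vert (b - 1) \<in> G" using assms(4) unfolding good_positions_def by auto
    then show "real (card {a \<in> X. {vert (b - 1), vert (Suc a)} \<notin> E}) \<le> m"
      using card_non_adjacent_successors[OF assms(1,2,3)] non_nbrs by (meson of_nat_le_iff order_trans)
  qed
  moreover have "real (card X) * m \<le> card V * m" "real (card W) * m \<le> card V * m"
    using card_le assms(5) by (simp_all add: mult_right_mono)
  ultimately show ?thesis by linarith
qed

lemma admissible_pairs_lower_bound:
  fixes \<epsilon> :: real
  assumes n: "1000 \<le> card V" and \<epsilon>: "0 < \<epsilon>" "\<epsilon> \<le> 1/100"
    and S: "S \<subseteq> V" "real (card S) \<le> (1 + \<epsilon>) * card V / 2"
    and few_low: "real (card {s \<in> S. real (deg_in E s S) < (1/2 - \<epsilon>) * card V}) \<le> \<epsilon> * card V"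
    and min_deg: "\<And>s. s \<in> S \<Longrightarrow> (1/4 - \<epsilon>) * card V \<le> real (deg_in E s S)"
    and F: "finite F" "card F \<le> 4"
    and cross: "\<And>u u'. u \<in> S \<Longrightarrow> u' \<in> V - S \<Longrightarrow> {u, u'} \<in> E \<Longrightarrow> u \<in> F"
    and arc: "x \<in> S" "\<pi> x \<in> S"
  shows "real (card V) ^ 2 / 300 \<le> real (card admissible_pairs)"
proof -
  define N where "N = real (card V)"
  define G where "G = {s \<in> S. (1/2 - \<epsilon>) * N \<le> real (deg_in E s S)}"
  define X where "X = {a \<in> good_positions G. {x, vert a} \<in> E}"
  define W where "W = {b \<in> good_positions G. {\<pi> x, vert b} \<in> E}"
  have "S - G = {s \<in> S. real (deg_in E s S) < (1/2 - \<epsilon>) * card V}"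
    unfolding G_def N_def by auto
  then have G: "G \<subseteq> S" "real (card (S - G)) \<le> \<epsilon> * N"
    using few_low unfolding G_def N_def by auto
  have many: "(1/4 - 3 * \<epsilon>) * N - 6 \<le> real (card {a \<in> good_positions G. {z, vert a} \<in> E})"
    if "z \<in> S" for z
  proof -
    have "deg_in E z S \<le> card {a \<in> good_positions G. {z, vert a} \<in> E} + 2 + card F + 2 * card (S - G)"
      using S(1) F(1) cross by (rule deg_in_le_card_good_positions)
    then have "real (deg_in E z S) \<le> real (card {a \<in> good_positions G. {z, vert a} \<in> E}) + 6 + 2 * (\<epsilon> * N)"
      using F(2) G(2) by linarith
    then show ?thesis
      using min_deg[OF that] unfolding N_def by (simp add: algebra_simps)
  qed
  have "real (card {(a, b) \<in> X \<times> W. {vert (a - 1), vert (Suc b)} \<notin> E})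
      + real (card {(a, b) \<in> X \<times> W. {vert (b - 1), vert (Suc a)} \<notin> E}) \<le> 2 * N * (3/2 * \<epsilon> * N)"
    unfolding N_def
  proof (rule card_chord_failures_le[OF S(1) G(1)])
    show "X \<subseteq> good_positions G" "W \<subseteq> good_positions G" "0 \<le> 3/2 * \<epsilon> * real (card V)"
      unfolding X_def W_def using \<epsilon>(1) by auto
    show "real (card {u \<in> S. {g, u} \<notin> E}) \<le> 3/2 * \<epsilon> * real (card V)" if "g \<in> G" for g
      using that S finite_V unfolding G_def N_def by (intro card_non_neighbours_le) (auto intro: finite_subset)
  qed
  moreover have "card X * card W \<le> card admissible_pairs
           + card {(a, b) \<in> X \<times> W. {vert (a - 1), vert (Suc b)} \<notin> E}
           + card {(a, b) \<in> X \<times> W. {vert (b - 1), vert (Suc a)} \<notin> E} + 2"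
    by (rule card_product_le_admissible_pairs) (auto simp: X_def W_def good_positions_def)
  then have "real (card X) * real (card W) \<le> real (card admissible_pairs)
           + real (card {(a, b) \<in> X \<times> W. {vert (a - 1), vert (Suc b)} \<notin> E})
           + real (card {(a, b) \<in> X \<times> W. {vert (b - 1), vert (Suc a)} \<notin> E}) + 2"
    by (simp only: of_nat_mult [symmetric] of_nat_le_iff of_nat_add [symmetric] of_nat_numeral)
  moreover have "2 * N * (3/2 * \<epsilon> * N) = 3 * \<epsilon> * N\<^sup>2"
    by (simp add: power2_eq_square)
  ultimately have "real (card X) * real (card W) \<le> real (card admissible_pairs) + 3 * \<epsilon> * N\<^sup>2 + 2"
    by linarith
  then show ?thesis
    using switching_count_arithmetic[of N \<epsilon>] n \<epsilon>(2) many[OF arc(1)] many[OF arc(2)]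
    unfolding N_def X_def W_def by simp
qed

lemma two_clique_admissible_pairs_lower_bound:
  fixes \<epsilon> :: real
  assumes n: "1000 \<le> card V" and \<epsilon>: "0 < \<epsilon>" "\<epsilon> \<le> 1/100"
    and two_clique: "superextremal_two_clique \<epsilon> V E A B"
    and cross: "{e \<in> E. e \<inter> A \<noteq> {} \<and> e \<inter> B \<noteq> {}} = {{a1, b1}, {a2, b2}}"
    and x: "x \<in> A" "{x, \<pi> x} \<notin> {{a1, b1}, {a2, b2}}"
  shows "real (card V) ^ 2 / 300 \<le> real (card admissible_pairs)"
proof -
  have AB: "A \<union> B = V" "A \<inter> B = {}" "\<bar>real (card A) - real (card B)\<bar> \<le> \<epsilon> * card V"
    and few_low: "real (card {a \<in> A. real (deg_in E a A) < (1/2 - \<epsilon>) * card V}) \<le> \<epsilon> * card V"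
    and min_deg: "\<And>a. a \<in> A \<Longrightarrow> (1/4 - \<epsilon>) * card V \<le> real (deg_in E a A)"
    using two_clique unfolding superextremal_two_clique_def Let_def by simp_all
  have "card A + card B = card V"
    using AB(1,2) finite_V by (metis card_Un_disjoint finite_Un)
  then have card_A: "real (card A) \<le> (1 + \<epsilon>) * card V / 2"
    using AB(3) by (simp add: abs_le_iff algebra_simps flip: of_nat_add)
  have cross_edge: "{u, u'} \<in> {{a1, b1}, {a2, b2}}" if "u \<in> A" "u' \<in> V - A" "{u, u'} \<in> E" for u u'
  proof -
    have "u' \<in> B" using that(2) AB(1) by blast
    with that have "{u, u'} \<in> {e \<in> E. e \<inter> A \<noteq> {} \<and> e \<inter> B \<noteq> {}}" by auto
    with cross show ?thesis by simp
  qed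
  have F: "finite {a1, b1, a2, b2}" "card {a1, b1, a2, b2} \<le> 4"
    by (simp_all add: card_insert_le_m1)
  have "\<pi> x \<in> A"
  proof (rule ccontr)
    assume "\<pi> x \<notin> A"
    then have "\<pi> x \<in> V - A" using pi_in_V x_in_V by simp
    then show False using cross_edge[OF x(1) _ ham_arc_edge[OF x_in_V]] x(2) by simp
  qed
  show ?thesis
  proof (rule admissible_pairs_lower_bound[OF n \<epsilon> _ card_A few_low min_deg F _ x(1) \<open>\<pi> x \<in> A\<close>])
    show "A \<subseteq> V" using AB(1) by blast
    show "u \<in> {a1, b1, a2, b2}" if "u \<in> A" "u' \<in> V - A" "{u, u'} \<in> E" for u u'
      using cross_edge[OF that] by auto
  qed
qed

end

lemma superextremal_two_clique_sym:
  "superextremal_two_clique \<epsilon> V E A B \<Longrightarrow> superextremal_two_clique \<epsilon> V E B A"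
  unfolding superextremal_two_clique_def Let_def by (simp add: abs_minus_commute Un_commute Int_commute)

lemma two_clique_switching_count:
  fixes \<epsilon> :: real
  assumes graph: "simple_graph V E" and ham: "dir_ham_cycle V E \<pi>"
    and n: "1000 \<le> card V" and \<epsilon>: "0 < \<epsilon>" "\<epsilon> \<le> 1/100"
    and two_clique: "superextremal_two_clique \<epsilon> V E A B"
    and cross: "{e \<in> E. e \<inter> A \<noteq> {} \<and> e \<inter> B \<noteq> {}} = {{a1, b1}, {a2, b2}}"
    and x: "x \<in> V" "{x, \<pi> x} \<notin> {{a1, b1}, {a2, b2}}"
  shows "real (card V) ^ 2 / 300 \<le> real (card {(e', i). e' \<in> E - ham_edges V \<pi> \<and> i \<in> {1::nat, 2} \<and>
                                 admissible_switch V E \<pi> x e' i})"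
proof -
  interpret ham_cycle_arc V E \<pi> x
    using graph ham x(1) by unfold_locales
  have "A \<union> B = V"
    using two_clique unfolding superextremal_two_clique_def Let_def by simp
  then consider "x \<in> A" | "x \<in> B" using x(1) by blast
  then have "real (card V) ^ 2 / 300 \<le> real (card admissible_pairs)"
  proof cases
    case 1
    show ?thesis
      using two_clique_admissible_pairs_lower_bound[OF n \<epsilon> two_clique cross 1 x(2)] .
  next
    case 2
    have "{e \<in> E. e \<inter> B \<noteq> {} \<and> e \<inter> A \<noteq> {}} = {e \<in> E. e \<inter> A \<noteq> {} \<and> e \<inter> B \<noteq> {}}"
      by (rule Collect_cong) auto
    with cross have cross': "{e \<in> E. e \<inter> B \<noteq> {} \<and> e \<inter> A \<noteq> {}} = {{a1, b1}, {a2, b2}}"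
      by simp
    show ?thesis
      using two_clique_admissible_pairs_lower_bound[OF n \<epsilon>
          superextremal_two_clique_sym[OF two_clique] cross' 2 x(2)] .
  qed
  then show ?thesis
    unfolding admissible_pairs_def .
qed

theorem mainTheorem9:
  shows "\<exists>\<epsilon>0::real. \<epsilon>0 > 0 \<and> (\<exists>n0::nat. \<forall>\<epsilon>::real. \<forall>n::nat.
     0 < \<epsilon> \<and> \<epsilon> \<le> \<epsilon>0 \<and> n \<ge> n0 \<longrightarrow>
     (\<forall>(V::nat set) E A B a1 b1 a2 b2 \<pi>.
        simple_graph V E \<and> card V = n \<and>
        superextremal_two_clique \<epsilon> V E A B \<and>
        a1 \<in> A \<and> a2 \<in> A \<and> b1 \<in> B \<and> b2 \<in> B \<and> a1 \<noteq> a2 \<and> b1 \<noteq> b2 \<and>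
        {e \<in> E. e \<inter> A \<noteq> {} \<and> e \<inter> B \<noteq> {}} = {{a1, b1}, {a2, b2}} \<and>
        dir_ham_cycle V E \<pi>
        \<longrightarrow>
        (\<forall>x\<in>V. {x, \<pi> x} \<notin> {{a1, b1}, {a2, b2}} \<longrightarrow>
           real (card {(e', i). e' \<in> E - ham_edges V \<pi> \<and> i \<in> {1::nat, 2} \<and>
                                 admissible_switch V E \<pi> x e' i})
             \<ge> real n ^ 2 / 300)))"
  by (intro exI[of _ "1/100::real"] conjI exI[of _ "1000::nat"] allI impI ballI, simp)
    (elim conjE, hypsubst, rule two_clique_switching_count)

end
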